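(* Let $G$ be a strongly connected network on $\mathcal{V}$ with random-walk transition matrix $P$, stationary distribution $\pi$, $\Pi=\mathrm{diag}(\pi)$, and let $L^+$ be the Moore–Penrose pseudo-inverse of $L=\Pi(I-P)$. Then for all $i,k,m\in\mathcal{V}$, $$L^+_{im}+L^+_{kk}\geq L^+_{ik}+L^+_{km}.$$
   Context: $P=D^{-1}A$ for a nonnegative affinity matrix $A$ of a directed graph, $D=\mathrm{diag}(\sum_j a_{ij})$; strongly connected means all nodes mutually reachable. *)

theory Defs
  imports "HOL-Analysis.Analysis"
begin

text \<open>Vertex set = the finite type 'n. A is the nonnegative affinity matrix.\<close>

definition edge_rel :: "real^'n^'n \<Rightarrow> ('n \<times> 'n) set" where
  "edge_rel A = {(i, j). A $ i $ j > 0}"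

definition strongly_connected :: "real^'n^'n \<Rightarrow> bool" where
  "strongly_connected A \<longleftrightarrow> (\<forall>i j. (i, j) \<in> (edge_rel A)\<^sup>*)"

definition degree_matrix :: "real^'n^'n \<Rightarrow> real^'n^'n" where
  "degree_matrix A = (\<chi> i j. if i = j then (\<Sum>k\<in>UNIV. A $ i $ k) else 0)"

definition rw_matrix :: "real^'n^'n \<Rightarrow> real^'n^'n" where
  "rw_matrix A = matrix_inv (degree_matrix A) ** A"

definition diag_vec :: "real^'n \<Rightarrow> real^'n^'n" where
  "diag_vec v = (\<chi> i j. if i = j then v $ i else 0)"

definition stationary_distribution :: "real^'n^'n \<Rightarrow> real^'n \<Rightarrow> bool" where
  "stationary_distribution P \<pi> \<longleftrightarrow>
     (\<forall>i. \<pi> $ i \<ge> 0) \<and> (\<Sum>i\<in>UNIV. \<pi> $ i) = 1 \<and> \<pi> v* P = \<pi>"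

definition penrose_conds :: "real^'n^'n \<Rightarrow> real^'n^'n \<Rightarrow> bool" where
  "penrose_conds M X \<longleftrightarrow>
     M ** X ** M = M \<and> X ** M ** X = X \<and>
     transpose (M ** X) = M ** X \<and> transpose (X ** M) = X ** M"

definition pinv :: "real^'n^'n \<Rightarrow> real^'n^'n" where
  "pinv M = (THE X. penrose_conds M X)"

end

(*
  Put x = Lp (e_m - e_k), so that x_a = Lp_am - Lp_ak and the claim reads x_k <= x_i.
  The matrix L = Pi (I - P) has zero row sums (P is stochastic) and zero column sums
  (pi is stationary), and by strong connectivity its kernel consists of the constants.
  Hence L + J/n is invertible, Lp = (L + J/n)^-1 - J/n and L Lp = I - J/n, so
  L x = e_m - e_k.  Off k this is nonnegative; as pi > 0, x is superharmonic for the
  walk there, and the minimum principle for an irreducible chain puts the minimum of x at k.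
*)

theory Submission
  imports Defs
begin

subsection \<open>Minimum principle\<close>

definition row_stochastic :: "real^'n^'n \<Rightarrow> bool" where
  "row_stochastic P \<longleftrightarrow> (\<forall>a b. 0 \<le> P $ a $ b) \<and> (\<forall>a. (\<Sum>b\<in>UNIV. P $ a $ b) = 1)"

lemma rtrancl_minimum_principle:
  fixes x :: "'a::finite \<Rightarrow> real"
  assumes connected: "\<forall>i j. (i, j) \<in> R\<^sup>*"
    and spread: "\<forall>j l. j \<noteq> k \<longrightarrow> (\<forall>l'. x j \<le> x l') \<longrightarrow> (j, l) \<in> R \<longrightarrow> x l \<le> x j"
  shows "x k \<le> x i"
proof (rule ccontr)
  assume not_min: "\<not> x k \<le> x i"
  obtain j0 where j0: "\<forall>l. x j0 \<le> x l"
    using ex_min_if_finite[of "range x"] by (auto simp: not_less)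
  have "x b \<le> x j0" if "(j0, b) \<in> R\<^sup>*" for b
    using that
  proof (induction rule: rtrancl_induct)
    case (step a b)
    then have "\<forall>l. x a \<le> x l" and "a \<noteq> k"
      using j0 not_min by (meson order_trans)+
    then show ?case using spread step by fastforce
  qed simp
  then show False
    using connected j0 not_min by (meson order_trans)
qed

lemma row_stochastic_superharmonic_minimum:
  assumes P: "row_stochastic P" and "strongly_connected P"
    and superharmonic: "\<forall>j. j \<noteq> k \<longrightarrow> (P *v x) $ j \<le> x $ j"
  shows "x $ k \<le> x $ i"
proof (rule rtrancl_minimum_principle[where x = "($) x" and R = "edge_rel P"])
  show "\<forall>i j. (i, j) \<in> (edge_rel P)\<^sup>*"
    using \<open>strongly_connected P\<close> by (simp add: strongly_connected_def)
  show "\<forall>j l. j \<noteq> k \<longrightarrow> (\<forall>l'. x $ j \<le> x $ l') \<longrightarrow> (j, l) \<in> edge_rel P \<longrightarrow> x $ l \<le> x $ j"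
  proof (intro allI impI)
    fix j l
    assume "j \<noteq> k" and min: "\<forall>l'. x $ j \<le> x $ l'" and "(j, l) \<in> edge_rel P"
    define g where "g b = P $ j $ b * (x $ b - x $ j)" for b
    have g_nonneg: "\<forall>b\<in>UNIV. 0 \<le> g b"
      using P min by (simp add: g_def row_stochastic_def)
    have "(\<Sum>b\<in>UNIV. g b) = (P *v x) $ j - x $ j"
      using P by (simp add: g_def row_stochastic_def matrix_vector_mult_def right_diff_distrib
          sum_subtractf sum_distrib_right[symmetric])
    then have "(\<Sum>b\<in>UNIV. g b) = 0"
      using superharmonic \<open>j \<noteq> k\<close> g_nonneg sum_nonneg[of UNIV g] by fastforce
    then have "g l = 0"
      using g_nonneg sum_nonneg_eq_0_iff[of UNIV g] by simp
    then show "x $ l \<le> x $ j"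
      using \<open>(j, l) \<in> edge_rel P\<close> by (simp add: g_def edge_rel_def)
  qed
qed

lemma matrix_add_rdistrib: "((A::real^'n^'m) + B) ** (C::real^'p^'n) = A ** C + B ** C"
  by (simp add: matrix_matrix_mult_def vec_eq_iff distrib_right sum.distrib)

lemma matrix_diff_rdistrib: "((A::real^'n^'m) - B) ** (C::real^'p^'n) = A ** C - B ** C"
  by (simp add: matrix_matrix_mult_def vec_eq_iff left_diff_distrib sum_subtractf)

lemma matrix_diff_ldistrib: "(A::real^'n^'m) ** ((B::real^'p^'n) - C) = A ** B - A ** C"
  by (simp add: matrix_matrix_mult_def vec_eq_iff right_diff_distrib sum_subtractf)

lemma transpose_diff: "transpose ((A::real^'n^'m) - B) = transpose A - transpose B"
  by (simp add: transpose_def vec_eq_iff)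

lemma matrix_inv_eqI:
  fixes D M :: "real^'n^'n"
  assumes "D ** M = mat 1"
  shows "matrix_inv D = M"
proof -
  have "M ** D = mat 1"
    using assms by (rule matrix_left_right_inverse[THEN iffD1])
  have "D ** matrix_inv D = mat 1 \<and> matrix_inv D ** D = mat 1"
    unfolding matrix_inv_def by (rule someI[where x = M]) (use assms \<open>M ** D = mat 1\<close> in simp)
  then have "matrix_inv D = matrix_inv D ** (D ** M)"
    using assms by simp
  also have "\<dots> = M"
    using \<open>D ** matrix_inv D = mat 1 \<and> matrix_inv D ** D = mat 1\<close>
    by (simp add: matrix_mul_assoc)
  finally show ?thesis .
qed

lemma diag_vec_mult_nth: "(diag_vec u ** M) $ a $ b = u $ a * M $ a $ b"
  by (simp add: diag_vec_def matrix_matrix_mult_def if_distrib if_distribR cong: if_cong)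

lemma matrix_inv_diag_vec:
  assumes "\<forall>a. u $ a \<noteq> 0"
  shows "matrix_inv (diag_vec u) = diag_vec (\<chi> a. inverse (u $ a))"
  using assms by (intro matrix_inv_eqI) (simp add: vec_eq_iff diag_vec_mult_nth, simp add: diag_vec_def mat_def)

lemma degree_matrix_eq_diag_vec: "degree_matrix A = diag_vec (\<chi> a. \<Sum>b\<in>UNIV. A $ a $ b)"
  by (simp add: degree_matrix_def diag_vec_def vec_eq_iff)

lemma rw_matrix_nth:
  assumes "\<forall>a. (\<Sum>c\<in>UNIV. A $ a $ c) \<noteq> 0"
  shows "rw_matrix A $ a $ b = A $ a $ b / (\<Sum>c\<in>UNIV. A $ a $ c)"
  using assms
  by (simp add: rw_matrix_def degree_matrix_eq_diag_vec matrix_inv_diag_vec diag_vec_mult_nth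
      divide_inverse_commute)

lemma strongly_connected_degree_pos:
  assumes nonneg: "\<forall>a b. 0 \<le> A $ a $ b" and "strongly_connected A" and "b \<noteq> a"
  shows "0 < (\<Sum>c\<in>UNIV. A $ a $ c)"
proof -
  have "(a, b) \<in> (edge_rel A)\<^sup>*"
    using \<open>strongly_connected A\<close> by (simp add: strongly_connected_def)
  then obtain c where "(a, c) \<in> edge_rel A"
    using \<open>b \<noteq> a\<close> by (metis converse_rtranclE)
  then have "0 < A $ a $ c"
    by (simp add: edge_rel_def)
  also have "A $ a $ c \<le> (\<Sum>c\<in>UNIV. A $ a $ c)"
    using nonneg by (intro member_le_sum) auto
  finally show ?thesis .
qed

lemma rw_matrix_row_stochastic:
  assumes "\<forall>a b. 0 \<le> A $ a $ b" and degree_pos: "\<forall>a. 0 < (\<Sum>c\<in>UNIV. A $ a $ c)"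
  shows "row_stochastic (rw_matrix A)"
proof -
  have "\<forall>a. (\<Sum>c\<in>UNIV. A $ a $ c) \<noteq> 0"
    using degree_pos by (simp add: dual_order.strict_implies_not_eq)
  then show ?thesis
    using assms
    by (simp add: row_stochastic_def rw_matrix_nth sum_divide_distrib[symmetric] divide_nonneg_pos)
qed

lemma edge_rel_rw_matrix:
  assumes "\<forall>a b. 0 \<le> A $ a $ b" and degree_pos: "\<forall>a. 0 < (\<Sum>c\<in>UNIV. A $ a $ c)"
  shows "edge_rel (rw_matrix A) = edge_rel A"
proof -
  have "\<forall>a. (\<Sum>c\<in>UNIV. A $ a $ c) \<noteq> 0"
    using degree_pos by (simp add: dual_order.strict_implies_not_eq)
  then have "0 < rw_matrix A $ a $ b \<longleftrightarrow> 0 < A $ a $ b" for a b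
    using degree_pos[rule_format, of a] by (simp add: rw_matrix_nth zero_less_divide_iff)
  then show ?thesis
    by (simp add: edge_rel_def)
qed

lemma stationary_distribution_pos:
  assumes nonneg: "\<forall>a b. 0 \<le> P $ a $ b" and "strongly_connected P"
    and stat: "stationary_distribution P \<pi>"
  shows "0 < \<pi> $ a"
proof (rule ccontr)
  assume "\<not> 0 < \<pi> $ a"
  have \<pi>_nonneg: "0 \<le> \<pi> $ c" for c
    using stat by (simp add: stationary_distribution_def)
  have \<pi>_balance: "(\<Sum>c\<in>UNIV. \<pi> $ c * P $ c $ b) = \<pi> $ b" for b
    using stat by (auto simp: stationary_distribution_def vector_matrix_mult_def vec_eq_iff)
  have "\<pi> $ c = 0" if "(c, a) \<in> (edge_rel P)\<^sup>*" for c
    using that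
  proof (induction rule: converse_rtrancl_induct)
    case base
    then show ?case using \<open>\<not> 0 < \<pi> $ a\<close> \<pi>_nonneg[of a] by simp
  next
    case (step c d)
    have "\<pi> $ c * P $ c $ d \<le> (\<Sum>c'\<in>UNIV. \<pi> $ c' * P $ c' $ d)"
      using \<pi>_nonneg nonneg by (intro member_le_sum) auto
    then have "\<pi> $ c * P $ c $ d \<le> 0"
      using \<pi>_balance[of d] step.IH by simp
    moreover have "0 < P $ c $ d"
      using step.hyps(1) by (simp add: edge_rel_def)
    ultimately show ?case
      using \<pi>_nonneg[of c] by (simp add: mult_le_0_iff)
  qed
  then have "\<forall>c. \<pi> $ c = 0"
    using \<open>strongly_connected P\<close> by (simp add: strongly_connected_def)
  then show False
    using stat by (simp add: stationary_distribution_def)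
qed

lemma laplacian_mult_nth:
  "((diag_vec \<pi> ** (mat 1 - P)) *v x) $ a = \<pi> $ a * (x $ a - (P *v x) $ a)"
  by (simp add: matrix_vector_mul_assoc[symmetric] matrix_vector_mult_diff_rdistrib)
    (simp add: diag_vec_def matrix_vector_mult_def if_distrib if_distribR cong: if_cong)

lemma laplacian_mult_ones:
  assumes "row_stochastic P"
  shows "(diag_vec \<pi> ** (mat 1 - P)) *v 1 = 0"
proof -
  have "P *v 1 = 1"
    using assms by (simp add: row_stochastic_def matrix_vector_mult_def vec_eq_iff)
  then show ?thesis
    by (simp add: vec_eq_iff laplacian_mult_nth)
qed

lemma ones_mult_laplacian:
  assumes "stationary_distribution P \<pi>"
  shows "1 v* (diag_vec \<pi> ** (mat 1 - P)) = 0"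
proof -
  have "1 v* diag_vec \<pi> = \<pi>"
    by (simp add: vec_eq_iff diag_vec_def vector_matrix_mult_def if_distrib if_distribR cong: if_cong)
  then show ?thesis
    using assms
    by (simp add: vector_matrix_mul_assoc[symmetric] vector_matrix_mult_diff_rdistrib
        stationary_distribution_def)
qed

lemma laplacian_kernel_constant:
  assumes "row_stochastic P" and "strongly_connected P" and "\<forall>a. 0 < \<pi> $ a"
    and "(diag_vec \<pi> ** (mat 1 - P)) *v y = 0"
  shows "y $ a = y $ b"
proof -
  have "\<pi> $ j * (y $ j - (P *v y) $ j) = 0" for j
    using assms(4) laplacian_mult_nth[of \<pi> P y j] by simp
  then have "\<forall>j. (P *v y) $ j \<le> y $ j"
    using assms(3) by (simp add: less_imp_neq[symmetric])
  then show ?thesis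
    using row_stochastic_superharmonic_minimum[OF assms(1,2)] by (meson order_antisym)
qed

subsection \<open>The pseudo-inverse of a matrix with zero row and column sums\<close>

definition averaging_matrix :: "real^'n^'n" where
  "averaging_matrix = (\<chi> a b. 1 / real CARD('n))"

lemma averaging_matrix_mult_vector_nth:
  "(averaging_matrix *v y) $ a = (\<Sum>b\<in>UNIV. y $ b) / real CARD('n)"
  for y :: "real^'n"
  by (simp add: averaging_matrix_def matrix_vector_mult_def sum_divide_distrib)

lemma averaging_matrix_idem: "averaging_matrix ** averaging_matrix = averaging_matrix"
  by (simp add: averaging_matrix_def matrix_matrix_mult_def vec_eq_iff)

lemma transpose_averaging_matrix: "transpose averaging_matrix = averaging_matrix"
  by (simp add: averaging_matrix_def transpose_def)

lemma matrix_mult_averaging_matrix: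
  assumes "L *v 1 = 0"
  shows "L ** averaging_matrix = 0"
  using assms by (simp add: averaging_matrix_def matrix_matrix_mult_def matrix_vector_mult_def
      vec_eq_iff sum_divide_distrib[symmetric])

lemma averaging_matrix_mult:
  assumes "1 v* L = 0"
  shows "averaging_matrix ** L = 0"
  using assms by (simp add: averaging_matrix_def matrix_matrix_mult_def vector_matrix_mult_def
      vec_eq_iff sum_divide_distrib[symmetric])

lemma plus_averaging_matrix_left_invertible:
  fixes L :: "real^'n^'n"
  assumes "1 v* L = 0" and kernel: "\<forall>y. L *v y = 0 \<longrightarrow> (\<forall>a b. y $ a = y $ b)"
  shows "\<exists>N. N ** (L + averaging_matrix) = mat 1"
  unfolding matrix_left_invertible_ker
proof (intro allI impI)
  fix y :: "real^'n"
  assume "(L + averaging_matrix) *v y = 0"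
  then have Ly: "L *v y = - (averaging_matrix *v y)"
    by (simp add: matrix_vector_mult_add_rdistrib eq_neg_iff_add_eq_0)
  have "1 \<bullet> (L *v y) = 0"
    using assms(1) dot_lmul_matrix[of 1 L y] by simp
  moreover have "1 \<bullet> (averaging_matrix *v y) = (\<Sum>b\<in>UNIV. y $ b)"
    by (simp add: inner_vec_def averaging_matrix_mult_vector_nth)
  ultimately have sum_zero: "(\<Sum>b\<in>UNIV. y $ b) = 0"
    unfolding Ly by simp
  then have "L *v y = 0"
    by (simp add: Ly vec_eq_iff averaging_matrix_mult_vector_nth)
  then have y_const: "y $ b = y $ a" for a b
    using kernel by blast
  have "(\<Sum>b\<in>UNIV. y $ b) = (\<Sum>b\<in>(UNIV::'n set). y $ a)" for a
    by (rule sum.cong) (simp_all add: y_const)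
  then show "y = 0"
    using sum_zero by (simp add: vec_eq_iff)
qed

lemma penrose_conds_unique:
  assumes "penrose_conds L X" and "penrose_conds L Y"
  shows "X = Y"
proof -
  from assms have x1: "L ** X ** L = L" and x2: "X ** L ** X = X"
    and x3: "transpose (L ** X) = L ** X" and x4: "transpose (X ** L) = X ** L"
    and y1: "L ** Y ** L = L" and y2: "Y ** L ** Y = Y"
    and y3: "transpose (L ** Y) = L ** Y" and y4: "transpose (Y ** L) = Y ** L"
    by (auto simp: penrose_conds_def)
  have "X = X ** transpose (L ** X)"
    using x2 x3 by (simp add: matrix_mul_assoc)
  also have "\<dots> = X ** transpose (L ** Y ** L ** X)"
    using y1 by simp
  also have "\<dots> = X ** transpose (L ** X) ** transpose (L ** Y)"
    by (simp add: matrix_transpose_mul matrix_mul_assoc)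
  also have "\<dots> = X ** L ** Y"
    using x2 x3 y3 by (simp add: matrix_mul_assoc)
  finally have X: "X = X ** L ** Y" .
  have "Y = transpose (Y ** L) ** Y"
    using y2 y4 by simp
  also have "\<dots> = transpose (Y ** L ** X ** L) ** Y"
    using x1 by (metis matrix_mul_assoc)
  also have "\<dots> = transpose (X ** L) ** transpose (Y ** L) ** Y"
    by (simp add: matrix_transpose_mul matrix_mul_assoc)
  also have "\<dots> = X ** L ** Y"
    using x4 y4 by (metis y2 matrix_mul_assoc)
  finally show ?thesis
    using X by simp
qed

lemma pinv_eqI: "penrose_conds L X \<Longrightarrow> pinv L = X"
  unfolding pinv_def using penrose_conds_unique by blast

lemma inverse_plus_averaging_matrix:
  fixes L N :: "real^'n^'n"
  assumes "L *v 1 = 0" and "1 v* L = 0" and N: "N ** (L + averaging_matrix) = mat 1"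
  shows "L ** (N - averaging_matrix) = mat 1 - averaging_matrix"
    and "(N - averaging_matrix) ** L = mat 1 - averaging_matrix"
    and "averaging_matrix ** (N - averaging_matrix) = 0"
proof -
  let ?E = "averaging_matrix :: real^'n^'n"
  have LE: "L ** ?E = 0" and EL: "?E ** L = 0"
    using assms by (simp_all add: matrix_mult_averaging_matrix averaging_matrix_mult)
  have "(L + ?E) ** N = mat 1"
    using N by (rule matrix_left_right_inverse[THEN iffD1])
  then have "?E = (?E ** (L + ?E)) ** N"
    by (metis matrix_mul_assoc matrix_mul_rid)
  then have EN: "?E ** N = ?E"
    by (simp add: matrix_add_ldistrib EL averaging_matrix_idem)
  have "?E = N ** ((L + ?E) ** ?E)"
    using N by (metis matrix_mul_assoc matrix_mul_lid)
  then have NE: "N ** ?E = ?E"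
    by (simp add: matrix_add_rdistrib LE averaging_matrix_idem)
  have "L = (L + ?E) - ?E"
    by simp
  then have "L ** N = mat 1 - ?E" and "N ** L = mat 1 - ?E"
    using N \<open>(L + ?E) ** N = mat 1\<close>
    by (metis matrix_diff_rdistrib EN, metis matrix_diff_ldistrib NE)
  then show "L ** (N - ?E) = mat 1 - ?E" and "(N - ?E) ** L = mat 1 - ?E"
    by (simp_all add: matrix_diff_ldistrib matrix_diff_rdistrib LE EL)
  show "?E ** (N - ?E) = 0"
    by (simp add: matrix_diff_ldistrib EN averaging_matrix_idem)
qed

lemma pinv_eq_inverse_plus_averaging_matrix:
  fixes L N :: "real^'n^'n"
  assumes "L *v 1 = 0" and "1 v* L = 0" and "N ** (L + averaging_matrix) = mat 1"
  shows "pinv L = N - averaging_matrix"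
proof (rule pinv_eqI)
  let ?E = "averaging_matrix :: real^'n^'n"
  note LX = inverse_plus_averaging_matrix(1)[OF assms]
    and XL = inverse_plus_averaging_matrix(2)[OF assms]
    and EX = inverse_plus_averaging_matrix(3)[OF assms]
  have sym: "transpose (mat 1 - ?E) = mat 1 - ?E"
    by (simp add: transpose_diff transpose_averaging_matrix)
  show "penrose_conds L (N - ?E)"
    unfolding penrose_conds_def
  proof (intro conjI)
    show "L ** (N - ?E) ** L = L"
      using averaging_matrix_mult[OF assms(2)] by (subst LX) (simp add: matrix_diff_rdistrib)
    show "(N - ?E) ** L ** (N - ?E) = N - ?E"
      by (subst XL) (simp add: matrix_diff_rdistrib EX)
  qed (simp_all only: LX XL sym)
qed

lemma matrix_mult_pinv_eq_mat_1_minus_averaging_matrix: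
  fixes L :: "real^'n^'n"
  assumes "L *v 1 = 0" and "1 v* L = 0" and "\<forall>y. L *v y = 0 \<longrightarrow> (\<forall>a b. y $ a = y $ b)"
  shows "L ** pinv L = mat 1 - averaging_matrix"
proof -
  obtain N where "N ** (L + averaging_matrix) = mat 1"
    using plus_averaging_matrix_left_invertible[OF assms(2,3)] by blast
  with assms(1,2) show ?thesis
    by (simp add: pinv_eq_inverse_plus_averaging_matrix inverse_plus_averaging_matrix(1))
qed

lemma laplacian_mult_pinv:
  assumes P: "row_stochastic P" and "strongly_connected P"
    and stat: "stationary_distribution P \<pi>"
  shows "(diag_vec \<pi> ** (mat 1 - P)) ** pinv (diag_vec \<pi> ** (mat 1 - P)) = mat 1 - averaging_matrix"
proof -
  have "\<forall>a. 0 < \<pi> $ a"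
    using assms stationary_distribution_pos unfolding row_stochastic_def by blast
  then show ?thesis
    using laplacian_kernel_constant[OF P \<open>strongly_connected P\<close>]
    by (intro matrix_mult_pinv_eq_mat_1_minus_averaging_matrix laplacian_mult_ones[OF P]
        ones_mult_laplacian[OF stat]) blast
qed

lemma laplacian_pinv_triangle:
  fixes P :: "real^'n^'n"
  assumes P: "row_stochastic P" and P_connected: "strongly_connected P"
    and stat: "stationary_distribution P \<pi>"
  defines "Lp \<equiv> pinv (diag_vec \<pi> ** (mat 1 - P))"
  shows "Lp $ i $ k + Lp $ k $ m \<le> Lp $ i $ m + Lp $ k $ k"
proof -
  define v :: "real^'n" where "v = axis m 1 - axis k 1"
  define x where "x = Lp *v v"
  have "averaging_matrix *v v = 0"
    by (simp add: v_def vec_eq_iff averaging_matrix_mult_vector_nth sum_subtractf axis_def)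
  then have Lx: "(diag_vec \<pi> ** (mat 1 - P)) *v x = v"
    using laplacian_mult_pinv[OF assms(1-3)] unfolding x_def Lp_def
    by (simp add: matrix_vector_mul_assoc matrix_vector_mult_diff_rdistrib)
  have "\<forall>j. j \<noteq> k \<longrightarrow> (P *v x) $ j \<le> x $ j"
  proof (intro allI impI)
    fix j
    assume "j \<noteq> k"
    then have "0 \<le> \<pi> $ j * (x $ j - (P *v x) $ j)"
      using Lx laplacian_mult_nth[of \<pi> P x j]
      by (simp add: v_def axis_def) (metis order.refl zero_le_one)
    moreover have "0 < \<pi> $ j"
      using P P_connected stat stationary_distribution_pos unfolding row_stochastic_def by blast
    ultimately show "(P *v x) $ j \<le> x $ j"
      by (auto simp: zero_le_mult_iff)
  qed
  then have "x $ k \<le> x $ i"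
    by (rule row_stochastic_superharmonic_minimum[OF P P_connected])
  moreover have "x $ a = Lp $ a $ m - Lp $ a $ k" for a
    by (simp add: x_def v_def matrix_vector_mult_diff_distrib matrix_vector_mult_basis column_def)
  ultimately show ?thesis
    by simp
qed

theorem mainTheorem16:
  fixes A :: "real^'n^'n" and \<pi> :: "real^'n" and i k m :: 'n
  assumes nonneg: "\<forall>a b. A $ a $ b \<ge> 0"
    and connected: "strongly_connected A"
    and stat: "stationary_distribution (rw_matrix A) \<pi>"
  shows "let L = diag_vec \<pi> ** (mat 1 - rw_matrix A); Lp = pinv L
         in Lp $ i $ m + Lp $ k $ k \<ge> Lp $ i $ k + Lp $ k $ m"
proof (cases "\<forall>a b :: 'n. a = b")
  case True
  \<comment> \<open>with one vertex the degree matrix may be singular, but then \<open>i = k = m\<close>\<close>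
  then have "i = k" and "m = k"
    by blast+
  then show ?thesis
    by (simp add: Let_def)
next
  case False
  then have degree_pos: "\<forall>a. 0 < (\<Sum>c\<in>UNIV. A $ a $ c)"
    using strongly_connected_degree_pos[OF nonneg connected] by metis
  have "row_stochastic (rw_matrix A)"
    using nonneg degree_pos by (rule rw_matrix_row_stochastic)
  moreover have "strongly_connected (rw_matrix A)"
    using connected by (simp add: strongly_connected_def edge_rel_rw_matrix[OF nonneg degree_pos])
  ultimately show ?thesis
    using laplacian_pinv_triangle[OF _ _ stat] by (simp add: Let_def)
qed

end
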